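(* Let $\beta\in B$ be an inversion point whose left and right vectors are both equal to $(0,0,-1)\in S^2$. For $p=(a,b,c)\in\mathbb{R}^3$ put $q=a+ib\in\mathbb{C}$, and for $P=(A,B,C)$ put $Q=A+iB$; these are the orthogonal projections to the $xy$-plane, identified with $\mathbb{C}$. There is a bijection $\beta\mapsto\kappa_\beta$ from the set of such inversion points onto the set of inversions of $\mathbb{C}$, i.e. maps $z\mapsto \frac{\alpha}{z-z_0}+w_0$ with $\alpha\in\mathbb{C}^*$ and $z_0,w_0\in\mathbb{C}$. It has the following property: for all $p,P\in\mathbb{R}^3$, the pseudo spherical condition for $(p,P)$ at $\beta$ holds if and only if $q$ lies in the domain of $\kappa_\beta$ and $\kappa_\beta(q)=Q$. Likewise, consider similarity points $\beta$ whose left and right vectors both equal $(0,0,-1)$. There is a bijection $\beta\mapsto\kappa_\beta$ from the set of such points onto the set of similarities of $\mathbb{C}$, i.e. maps $z\mapsto\alpha z+\gamma$ with $\alpha\in\mathbb{C}^*$ and $\gamma\in\mathbb{C}$. It has the property that, for all $p,P\in\mathbb{R}^3$, the pseudo spherical condition for $(p,P)$ at $\beta$ holds if and only if $\kappa_\beta(q)=Q$.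
   Context: Write a direct isometry of $\mathbb{R}^3$ as $v\mapsto Mv+y$ with $M\in SO(3)$, $y\in\mathbb{R}^3$, and put $x=-M^ty$, $r=\langle y,y\rangle$. It corresponds to the point $(h:M:x:y:r)=(1:m_{11}:\dots:m_{33}:x_1:x_2:x_3:y_1:y_2:y_3:r)\in\mathbb{P}^{16}_{\mathbb{C}}$. $X$ is the complex Zariski closure of the set of all such points. Throughout, $\langle u,u'\rangle=u^tu'$ is the complex bilinear form on $\mathbb{C}^3$. The boundary is $B=X\cap\{h=0\}$. For $\beta=(0:M:x:y:r)\in B$, the matrix $M$ has rank at most $1$; put $N=rM+2yx^t$. The point $\beta$ is: - an inversion point if $M\neq0$ and $N\neq0$; - a butterfly point if $M\neq 0$ and $N=0$; - a similarity point if $M=0$, $x\neq0$ and $y\neq 0$. Left and right vectors. For a nonzero $u=(\alpha,\beta',\gamma)\in\mathbb{C}^3$ with $\langle u,u\rangle=0$, define $S(u)\in S^2$ in two steps. - First map $u$ to $\mathbb{P}^1_{\mathbb{C}}$: send it to $(\alpha-i\beta':\gamma)$ if $(i\alpha+\beta',\gamma)\neq(0,0)$, and to $(\gamma:-\alpha-i\beta')$ otherwise. - Then apply the inverse stereographic projection: $(0:1)\mapsto(0,0,1)$ and $(1:a+ib)\mapsto\frac{1}{a^2+b^2+1}(2a,2b,a^2+b^2-1)$ for $a,b\in\mathbb{R}$. For an inversion or butterfly point, write $M=vw^t$ with $v,w\in\mathbb{C}^3$ nonzero and isotropic. The left vector is $L=S(w)$ and the right vector is $R=S(v)$. For a similarity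 point, $x$ and $y$ are nonzero isotropic vectors, and $L=S(x)$, $R=S(y)$. For example, $S((1,i,0))=(0,0,-1)$. The pseudo spherical condition for $(p,P)\in\mathbb{R}^3\times\mathbb{R}^3$ at $\beta=(0:M:x:y:r)\in B$ is the (complex) equation $$r-2\langle p,x\rangle-2\langle y,P\rangle-2\langle Mp,P\rangle=0.$$ *)

theory Defs
  imports "HOL-Analysis.Analysis"
begin

section \<open>Points of P^16: representatives (h, M, x, y, r)\<close>

type_synonym pt = "complex \<times> (complex^3^3) \<times> (complex^3) \<times> (complex^3) \<times> complex"

definition ph :: "pt \<Rightarrow> complex" where "ph v = fst v"
definition pM :: "pt \<Rightarrow> complex^3^3" where "pM v = fst (snd v)"
definition px :: "pt \<Rightarrow> complex^3" where "px v = fst (snd (snd v))"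
definition py :: "pt \<Rightarrow> complex^3" where "py v = fst (snd (snd (snd v)))"
definition pr :: "pt \<Rightarrow> complex" where "pr v = snd (snd (snd (snd v)))"

definition pscale :: "complex \<Rightarrow> pt \<Rightarrow> pt" where
  "pscale c v = (c * ph v, (\<chi> i j. c * pM v $ i $ j), c *s px v, c *s py v, c * pr v)"

definition proj_class :: "pt \<Rightarrow> pt set" where
  "proj_class v = {pscale c v | c. c \<noteq> 0}"

definition cinner :: "complex^3 \<Rightarrow> complex^3 \<Rightarrow> complex" where
  "cinner u w = (\<Sum>i\<in>UNIV. u $ i * w $ i)"

definition cvec :: "real^3 \<Rightarrow> complex^3" where
  "cvec p = (\<chi> i. complex_of_real (p $ i))"

definition cmat :: "real^3^3 \<Rightarrow> complex^3^3" where
  "cmat M = (\<chi> i j. complex_of_real (M $ i $ j))"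

definition outer :: "complex^3 \<Rightarrow> complex^3 \<Rightarrow> complex^3^3" where
  "outer u w = (\<chi> i j. u $ i * w $ j)"

text \<open>The point (1:M:x:y:r) of the direct isometry v |-> Mv + y.\<close>
definition isometry_point :: "real^3^3 \<Rightarrow> real^3 \<Rightarrow> pt" where
  "isometry_point M y =
     (1, cmat M, cvec (- (transpose M *v y)), cvec y, complex_of_real (y \<bullet> y))"

definition affine_pts :: "pt set" where
  "affine_pts = {isometry_point M y | M y. orthogonal_matrix M \<and> det M = 1}"

inductive_set polyfun :: "(pt \<Rightarrow> complex) set" where
  pconst: "(\<lambda>v. c) \<in> polyfun"
| ph: "ph \<in> polyfun"
| pM: "(\<lambda>v. pM v $ i $ j) \<in> polyfun"
| px: "(\<lambda>v. px v $ i) \<in> polyfun"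
| py: "(\<lambda>v. py v $ i) \<in> polyfun"
| pr: "pr \<in> polyfun"
| padd: "f \<in> polyfun \<Longrightarrow> g \<in> polyfun \<Longrightarrow> (\<lambda>v. f v + g v) \<in> polyfun"
| pmult: "f \<in> polyfun \<Longrightarrow> g \<in> polyfun \<Longrightarrow> (\<lambda>v. f v * g v) \<in> polyfun"

definition homog :: "nat \<Rightarrow> (pt \<Rightarrow> complex) \<Rightarrow> bool" where
  "homog d f \<longleftrightarrow> (\<forall>c v. f (pscale c v) = c ^ d * f v)"

text \<open>Nonzero representatives of points of the Zariski closure X (in P^16):
  all homogeneous polynomials vanishing on the isometry points vanish there.\<close>
definition X_cone :: "pt set" where
  "X_cone = {v. v \<noteq> (0, 0, 0, 0, 0) \<and>
     (\<forall>f d. f \<in> polyfun \<and> homog d f \<and> (\<forall>u\<in>affine_pts. f u = 0) \<longrightarrow> f v = 0)}"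

definition X :: "pt set set" where "X = proj_class ` X_cone"

text \<open>Representatives of boundary points B = X \<inter> {h = 0}.\<close>
definition boundary_rep :: "pt \<Rightarrow> bool" where
  "boundary_rep v \<longleftrightarrow> v \<in> X_cone \<and> ph v = 0"

definition Nmat :: "pt \<Rightarrow> complex^3^3" where
  "Nmat v = (\<chi> i j. pr v * pM v $ i $ j + 2 * py v $ i * px v $ j)"

definition inversion_rep :: "pt \<Rightarrow> bool" where
  "inversion_rep v \<longleftrightarrow> pM v \<noteq> 0 \<and> Nmat v \<noteq> 0"

definition similarity_rep :: "pt \<Rightarrow> bool" where
  "similarity_rep v \<longleftrightarrow> pM v = 0 \<and> px v \<noteq> 0 \<and> py v \<noteq> 0"

definition isotropic :: "complex^3 \<Rightarrow> bool" where
  "isotropic u \<longleftrightarrow> cinner u u = 0"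

text \<open>Map to P^1, given as a pair of homogeneous coordinates.\<close>
definition to_P1 :: "complex^3 \<Rightarrow> complex \<times> complex" where
  "to_P1 u = (let \<alpha> = u $ 1; \<beta> = u $ 2; \<gamma> = u $ 3 in
     if (\<i> * \<alpha> + \<beta>, \<gamma>) \<noteq> (0, 0) then (\<alpha> - \<i> * \<beta>, \<gamma>) else (\<gamma>, - \<alpha> - \<i> * \<beta>))"

text \<open>Inverse stereographic projection on homogeneous coordinates (z0 : z1):
  (0:1) goes to (0,0,1), and (1 : a+ib) as in the paper.\<close>
definition stereo :: "complex \<times> complex \<Rightarrow> real \<times> real \<times> real" where
  "stereo z = (if fst z = 0 then (0, 0, 1) else
     (let w = snd z / fst z; a = Re w; b = Im w; n = a\<^sup>2 + b\<^sup>2 + 1 in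
       (2 * a / n, 2 * b / n, (a\<^sup>2 + b\<^sup>2 - 1) / n)))"

definition S :: "complex^3 \<Rightarrow> real \<times> real \<times> real" where
  "S u = stereo (to_P1 u)"

definition south :: "real \<times> real \<times> real" where "south = (0, 0, -1)"

text \<open>Left vector S(w) and right vector S(v) for M = v w^t, both equal to (0,0,-1).\<close>
definition lr_south_inv :: "pt \<Rightarrow> bool" where
  "lr_south_inv v \<longleftrightarrow> (\<exists>a b. a \<noteq> 0 \<and> b \<noteq> 0 \<and> isotropic a \<and> isotropic b \<and>
      pM v = outer a b \<and> S b = south \<and> S a = south)"

text \<open>For similarity points L = S(x), R = S(y).\<close>
definition lr_south_sim :: "pt \<Rightarrow> bool" where
  "lr_south_sim v \<longleftrightarrow> S (px v) = south \<and> S (py v) = south"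

definition inv_south_pts :: "pt set set" where
  "inv_south_pts = proj_class ` {v. boundary_rep v \<and> inversion_rep v \<and> lr_south_inv v}"

definition sim_south_pts :: "pt set set" where
  "sim_south_pts = proj_class ` {v. boundary_rep v \<and> similarity_rep v \<and> lr_south_sim v}"

definition psc_rep :: "pt \<Rightarrow> real^3 \<Rightarrow> real^3 \<Rightarrow> bool" where
  "psc_rep v p P \<longleftrightarrow>
     pr v - 2 * cinner (cvec p) (px v) - 2 * cinner (py v) (cvec P)
       - 2 * cinner (pM v *v cvec p) (cvec P) = 0"

definition pseudo_spherical :: "pt set \<Rightarrow> real^3 \<Rightarrow> real^3 \<Rightarrow> bool" where
  "pseudo_spherical \<beta> p P \<longleftrightarrow> (\<forall>v\<in>\<beta>. psc_rep v p P)"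

definition proj_xy :: "real^3 \<Rightarrow> complex" where
  "proj_xy p = Complex (p $ 1) (p $ 2)"

definition inversions_C :: "(complex \<Rightarrow> complex option) set" where
  "inversions_C = {f. \<exists>\<alpha> z0 w0. \<alpha> \<noteq> 0 \<and>
     f = (\<lambda>z. if z = z0 then None else Some (\<alpha> / (z - z0) + w0))}"

definition similarities_C :: "(complex \<Rightarrow> complex) set" where
  "similarities_C = {f. \<exists>\<alpha> \<gamma>. \<alpha> \<noteq> 0 \<and> f = (\<lambda>z. \<alpha> * z + \<gamma>)}"

end

theory Submission
  imports Defs "HOL-Complex_Analysis.Conformal_Mappings"
begin

text \<open>
  On the boundary the equations \<open>Mx + hy = 0\<close>, \<open>M\<^sup>ty + hx = 0\<close>, \<open>\<langle>x,x\<rangle> = hr\<close>,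
  \<open>\<langle>y,y\<rangle> = hr\<close> of \<open>X\<close> become \<open>Mx = 0\<close>, \<open>M\<^sup>ty = 0\<close> and isotropy of \<open>x\<close>, \<open>y\<close>.
  Since \<open>e = (1, i, 0)\<close> spans the only isotropic line sent to the south pole by \<open>S\<close>, they force
  a boundary point with south left and right vectors into the form
  \<open>(0 : l e e\<^sup>t : m e : n e : r)\<close>. Conversely every such point lies in \<open>X\<close>: it is the value at
  \<open>0\<close> of a holomorphic curve whose other values are rescaled complexified isometries, and
  polynomials vanishing on the real isometries vanish there by analytic continuation.
  At such a point the pseudo spherical condition reads \<open>r - 2mq - 2nQ - 2lqQ = 0\<close>; after
  normalising \<open>l = 1\<close> (resp. \<open>l = 0, n = 1\<close>) this is \<open>(q - z\<^sub>0)(Q - w\<^sub>0) = \<alpha>\<close>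
  (resp. \<open>Q = \<alpha>q + \<gamma>\<close>), and the normalised coefficients are exactly the parameters of the
  inversion (resp. similarity).
\<close>

lemma pt_coords [simp]:
  "ph (a, b, c, d, e) = a" "pM (a, b, c, d, e) = b" "px (a, b, c, d, e) = c"
  "py (a, b, c, d, e) = d" "pr (a, b, c, d, e) = e"
  by (simp_all add: ph_def pM_def px_def py_def pr_def)

lemma pt_eq_iff:
  "v = w \<longleftrightarrow> ph v = ph w \<and> pM v = pM w \<and> px v = px w \<and> py v = py w \<and> pr v = pr w"
  by (cases v; cases w) (simp add: ph_def pM_def px_def py_def pr_def)

lemma pscale_coords [simp]:
  "ph (pscale c v) = c * ph v" "pM (pscale c v) $ i $ j = c * pM v $ i $ j"
  "px (pscale c v) = c *s px v" "py (pscale c v) = c *s py v" "pr (pscale c v) = c * pr v"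
  by (simp_all add: pscale_def)

lemma pscale_pscale: "pscale c (pscale d v) = pscale (c * d) v"
  by (simp add: pt_eq_iff vec_eq_iff pscale_def)

lemma pscale_one: "pscale 1 v = v"
  by (simp add: pt_eq_iff vec_eq_iff pscale_def)

lemma mem_proj_class_self: "v \<in> proj_class v"
  unfolding proj_class_def by (auto intro!: exI[of _ 1] simp: pscale_one)

lemma proj_class_pscale:
  assumes c: "c \<noteq> 0"
  shows "proj_class (pscale c v) = proj_class v"
  unfolding proj_class_def
proof (intro set_eqI iffI)
  fix w
  assume "w \<in> {pscale d (pscale c v) |d. d \<noteq> 0}"
  then obtain d where "d \<noteq> 0" "w = pscale (d * c) v" by (auto simp: pscale_pscale)
  with c show "w \<in> {pscale d v |d. d \<noteq> 0}" by auto
next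
  fix w
  assume "w \<in> {pscale d v |d. d \<noteq> 0}"
  then obtain d where d: "d \<noteq> 0" "w = pscale d v" by auto
  then have "w = pscale (d / c) (pscale c v)" and "d / c \<noteq> 0"
    using c by (simp_all add: pscale_pscale)
  then show "w \<in> {pscale d (pscale c v) |d. d \<noteq> 0}" by blast
qed

lemma homog_pscale: "homog d f \<Longrightarrow> f (pscale c v) = c ^ d * f v"
  unfolding homog_def by blast

definition pt_holomorphic_on :: "(complex \<Rightarrow> pt) \<Rightarrow> complex set \<Rightarrow> bool" where
  "pt_holomorphic_on \<Psi> D \<longleftrightarrow>
     (\<lambda>z. ph (\<Psi> z)) holomorphic_on D \<and> (\<forall>i j. (\<lambda>z. pM (\<Psi> z) $ i $ j) holomorphic_on D) \<and>
     (\<forall>i. (\<lambda>z. px (\<Psi> z) $ i) holomorphic_on D) \<and> (\<forall>i. (\<lambda>z. py (\<Psi> z) $ i) holomorphic_on D) \<and>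
     (\<lambda>z. pr (\<Psi> z)) holomorphic_on D"

lemma polyfun_holomorphic_on:
  "f \<in> polyfun \<Longrightarrow> pt_holomorphic_on \<Psi> D \<Longrightarrow> (\<lambda>z. f (\<Psi> z)) holomorphic_on D"
  by (induction rule: polyfun.induct) (auto simp: pt_holomorphic_on_def intro!: holomorphic_intros)

lemma polyfun_sum3: "(\<And>i. f i \<in> polyfun) \<Longrightarrow> (\<lambda>v. \<Sum>i\<in>(UNIV::3 set). f i v) \<in> polyfun"
  unfolding sum_3 by (intro polyfun.padd) auto

lemma polyfun_diff:
  assumes "f \<in> polyfun" "g \<in> polyfun"
  shows "(\<lambda>v. f v - g v) \<in> polyfun"
proof -
  have "(\<lambda>v. f v + (\<lambda>v. -1) v * g v) \<in> polyfun"
    by (intro polyfun.padd polyfun.pmult assms polyfun.pconst)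
  then show ?thesis by simp
qed

lemma zero_islimpt_reals: "0 islimpt range complex_of_real"
  unfolding islimpt_approachable
proof (intro allI impI)
  fix e :: real
  assume "0 < e"
  then show "\<exists>x'\<in>range complex_of_real. x' \<noteq> 0 \<and> dist x' 0 < e"
    by (intro bexI[OF _ rangeI[of complex_of_real "e / 2"]]) auto
qed

lemma holomorphic_zero_on_reals_imp_zero:
  assumes "g holomorphic_on D" "open D" "connected D" "\<And>x. complex_of_real x \<in> D"
    and "\<And>x. g (complex_of_real x) = 0" and "z \<in> D"
  shows "g z = 0"
  by (rule analytic_continuation[of g D "range complex_of_real" 0])
     (use assms zero_islimpt_reals assms(4)[of 0] in auto)

section \<open>Equations of \<open>X\<close> at the boundary\<close>

definition eq_Mx_hy :: "3 \<Rightarrow> pt \<Rightarrow> complex" where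
  "eq_Mx_hy i v = (\<Sum>j\<in>UNIV. pM v $ i $ j * px v $ j) + ph v * py v $ i"

definition eq_Mty_hx :: "3 \<Rightarrow> pt \<Rightarrow> complex" where
  "eq_Mty_hx i v = (\<Sum>j\<in>UNIV. pM v $ j $ i * py v $ j) + ph v * px v $ i"

definition eq_xx_hr :: "pt \<Rightarrow> complex" where
  "eq_xx_hr v = (\<Sum>j\<in>UNIV. px v $ j * px v $ j) - ph v * pr v"

definition eq_yy_hr :: "pt \<Rightarrow> complex" where
  "eq_yy_hr v = (\<Sum>j\<in>UNIV. py v $ j * py v $ j) - ph v * pr v"

lemma X_equations_polyfun:
  "eq_Mx_hy i \<in> polyfun" "eq_Mty_hx i \<in> polyfun" "eq_xx_hr \<in> polyfun" "eq_yy_hr \<in> polyfun"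
  unfolding eq_Mx_hy_def[abs_def] eq_Mty_hx_def[abs_def] eq_xx_hr_def[abs_def] eq_yy_hr_def[abs_def]
  by (intro polyfun.intros polyfun_sum3 polyfun_diff; rule polyfun.intros)+

lemma X_equations_homog:
  "homog 2 (eq_Mx_hy i)" "homog 2 (eq_Mty_hx i)" "homog 2 eq_xx_hr" "homog 2 eq_yy_hr"
  unfolding homog_def eq_Mx_hy_def eq_Mty_hx_def eq_xx_hr_def eq_yy_hr_def
  by (simp_all add: sum_distrib_left power2_eq_square algebra_simps)

lemma orthogonal_matrix_transpose_inner:
  assumes "orthogonal_matrix M"
  shows "(transpose M *v y) \<bullet> (transpose M *v y) = y \<bullet> (y::real^'n)"
proof -
  have "(transpose M *v y) \<bullet> (transpose M *v y) = (y v* M) \<bullet> (transpose M *v y)" by simp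
  also have "\<dots> = y \<bullet> (M *v (transpose M *v y))" by (rule dot_lmul_matrix)
  also have "\<dots> = y \<bullet> y"
    using assms by (simp only: matrix_vector_mul_assoc orthogonal_matrix_def matrix_vector_mul_lid)
  finally show ?thesis .
qed

lemma orthogonal_matrix_mult_transpose_vector:
  "orthogonal_matrix M \<Longrightarrow> M *v (transpose M *v y) = (y::real^'n)"
  by (simp only: matrix_vector_mul_assoc orthogonal_matrix_def matrix_vector_mul_lid)

lemma mv_neg: "M *v (- x) = - (M *v (x::'a::comm_ring_1^'n))"
  by (simp add: vec_eq_iff matrix_vector_mult_def sum_negf)

lemma X_equations_vanish_on_isometries:
  assumes "u \<in> affine_pts"
  shows "eq_Mx_hy i u = 0" "eq_Mty_hx i u = 0" "eq_xx_hr u = 0" "eq_yy_hr u = 0"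
proof -
  obtain M y where u: "u = isometry_point M y" and M: "orthogonal_matrix M"
    using assms unfolding affine_pts_def by blast
  have "eq_Mx_hy i u = complex_of_real ((M *v (- (transpose M *v y))) $ i + y $ i)"
    unfolding u eq_Mx_hy_def isometry_point_def
    by (simp del: transpose_matrix_vector add: cmat_def cvec_def matrix_vector_mult_def)
  then show "eq_Mx_hy i u = 0"
    using orthogonal_matrix_mult_transpose_vector[OF M, of y] by (simp add: mv_neg)
  show "eq_Mty_hx i u = 0"
    unfolding u eq_Mty_hx_def isometry_point_def
    by (simp del: transpose_matrix_vector add: cmat_def cvec_def matrix_vector_mult_def transpose_def)
  have "eq_xx_hr u = complex_of_real ((transpose M *v y) \<bullet> (transpose M *v y) - y \<bullet> y)"
    unfolding u eq_xx_hr_def isometry_point_def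
    by (simp del: transpose_matrix_vector add: cmat_def cvec_def inner_vec_def)
  then show "eq_xx_hr u = 0" using orthogonal_matrix_transpose_inner[OF M, of y] by simp
  show "eq_yy_hr u = 0"
    unfolding u eq_yy_hr_def isometry_point_def by (simp add: cvec_def inner_vec_def)
qed

lemma boundary_X_cone_equations:
  assumes v: "v \<in> X_cone" and h: "ph v = 0"
  shows "pM v *v px v = 0" "transpose (pM v) *v py v = 0" "isotropic (px v)" "isotropic (py v)"
proof -
  have vanish: "f v = 0" if "f \<in> polyfun" "homog 2 f" "\<And>u. u \<in> affine_pts \<Longrightarrow> f u = 0" for f
    using v that unfolding X_cone_def by blast
  have "eq_Mx_hy i v = 0" "eq_Mty_hx i v = 0" "eq_xx_hr v = 0" "eq_yy_hr v = 0" for i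
    using vanish[OF X_equations_polyfun(1) X_equations_homog(1) X_equations_vanish_on_isometries(1)]
          vanish[OF X_equations_polyfun(2) X_equations_homog(2) X_equations_vanish_on_isometries(2)]
          vanish[OF X_equations_polyfun(3) X_equations_homog(3) X_equations_vanish_on_isometries(3)]
          vanish[OF X_equations_polyfun(4) X_equations_homog(4) X_equations_vanish_on_isometries(4)]
    by simp_all
  then have "(\<Sum>j\<in>UNIV. pM v $ i $ j * px v $ j) = 0" "(\<Sum>j\<in>UNIV. pM v $ j $ i * py v $ j) = 0"
    "(\<Sum>j\<in>UNIV. px v $ j * px v $ j) = 0" "(\<Sum>j\<in>UNIV. py v $ j * py v $ j) = 0" for i
    using h unfolding eq_Mx_hy_def eq_Mty_hx_def eq_xx_hr_def eq_yy_hr_def by simp_all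
  then show "pM v *v px v = 0" "transpose (pM v) *v py v = 0" "isotropic (px v)" "isotropic (py v)"
    unfolding isotropic_def cinner_def vec_eq_iff matrix_vector_mult_def transpose_def by simp_all
qed

definition e_south :: "complex^3" where "e_south = vector [1, \<i>, 0]"

lemma e_south_components [simp]: "e_south $ 1 = 1" "e_south $ 2 = \<i>" "e_south $ 3 = 0"
  by (simp_all add: e_south_def)

lemma e_south_nonzero [simp]: "e_south \<noteq> 0" "\<exists>i. e_south $ i \<noteq> 0"
  by (auto simp: vec_eq_iff intro: exI[of _ 1])

lemma stereo_eq_south_iff: "stereo z = south \<longleftrightarrow> fst z \<noteq> 0 \<and> snd z = 0"
proof (cases "fst z = 0")
  case True
  then show ?thesis by (simp add: stereo_def south_def)
next
  case False
  define w where "w = snd z / fst z"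
  have n: "Re w ^ 2 + Im w ^ 2 + 1 > 0" by (smt (verit) zero_le_power2)
  have "stereo z = south \<longleftrightarrow> Re w = 0 \<and> Im w = 0"
    using False n unfolding stereo_def south_def Let_def w_def[symmetric] by (auto simp: field_simps)
  also have "\<dots> \<longleftrightarrow> w = 0" by (simp add: complex_eq_iff)
  also have "\<dots> \<longleftrightarrow> snd z = 0" using False by (simp add: w_def)
  finally show ?thesis using False by simp
qed

lemma S_eq_south_iff: "S u = south \<longleftrightarrow> u $ 3 = 0 \<and> \<i> * u $ 1 + u $ 2 \<noteq> 0 \<and> u $ 1 - \<i> * u $ 2 \<noteq> 0"
  unfolding S_def to_P1_def Let_def by (simp add: stereo_eq_south_iff) blast

lemma cinner_self_3: "cinner u u = u $ 1 * u $ 1 + u $ 2 * u $ 2 + u $ 3 * u $ 3"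
  by (simp add: cinner_def sum_3)

lemma isotropic_S_south_imp_e_south_multiple:
  assumes "isotropic u" "S u = south"
  shows "u $ 1 \<noteq> 0 \<and> u = u $ 1 *s e_south"
proof -
  have u3: "u $ 3 = 0" and a: "\<i> * u $ 1 + u $ 2 \<noteq> 0" and b: "u $ 1 - \<i> * u $ 2 \<noteq> 0"
    using assms(2) S_eq_south_iff by auto
  have "(u $ 1 + \<i> * u $ 2) * (u $ 1 - \<i> * u $ 2) = 0"
    using assms(1) u3 by (simp add: isotropic_def cinner_self_3 algebra_simps)
  then have "\<i> * (u $ 1 + \<i> * u $ 2) = 0" using b by simp
  then have "u $ 2 = \<i> * u $ 1" by (simp add: algebra_simps)
  moreover from this have "u $ 1 \<noteq> 0" using a by auto
  ultimately show ?thesis using u3 by (simp add: vec_eq_iff forall_3)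
qed

lemma isotropic_orthogonal_e_south:
  assumes "x $ 1 + \<i> * x $ 2 = 0" "isotropic x"
  shows "x = x $ 1 *s e_south"
proof -
  have x1: "x $ 1 = - \<i> * x $ 2" using assms(1) by (simp add: eq_neg_iff_add_eq_0)
  then have "x $ 3 * x $ 3 = 0" using assms(2) by (simp add: isotropic_def cinner_self_3 algebra_simps)
  then show ?thesis using x1 by (simp add: vec_eq_iff forall_3) (simp add: algebra_simps)
qed

lemma S_scaled_e_south: "c \<noteq> 0 \<Longrightarrow> S (c *s e_south) = south"
  by (simp add: S_eq_south_iff)

lemma isotropic_scaled_e_south: "isotropic (c *s e_south)"
  by (simp add: isotropic_def cinner_self_3 algebra_simps)

definition south_point :: "complex \<Rightarrow> complex \<Rightarrow> complex \<Rightarrow> complex \<Rightarrow> pt" where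
  "south_point l m n r = (0, outer (l *s e_south) e_south, m *s e_south, n *s e_south, r)"

lemma south_point_pscale:
  "pscale c (south_point l m n r) = south_point (c * l) (c * m) (c * n) (c * r)"
  by (simp add: south_point_def pt_eq_iff vec_eq_iff outer_def pscale_def)

lemma Nmat_south_point:
  "Nmat (south_point l m n r) $ i $ j = (l * r + 2 * m * n) * e_south $ i * e_south $ j"
  by (simp add: Nmat_def south_point_def outer_def algebra_simps)

lemma inversion_south_normal_form:
  assumes br: "boundary_rep v" and ir: "inversion_rep v" and lr: "lr_south_inv v"
  obtains l m n r where "l \<noteq> 0" "l * r + 2 * m * n \<noteq> 0" "v = south_point l m n r"
proof -
  obtain a b where ab: "isotropic a" "isotropic b" "pM v = outer a b" "S b = south" "S a = south"
    using lr unfolding lr_south_inv_def by blast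
  have v: "v \<in> X_cone" "ph v = 0" using br unfolding boundary_rep_def by auto
  note eqs = boundary_X_cone_equations[OF v]
  obtain a1 b1 where a1b1: "a1 \<noteq> 0" "b1 \<noteq> 0" "a = a1 *s e_south" "b = b1 *s e_south"
    using isotropic_S_south_imp_e_south_multiple ab by metis
  define l where "l = a1 * b1"
  have l: "l \<noteq> 0" using a1b1 by (simp add: l_def)
  have M: "pM v $ i $ j = l * e_south $ i * e_south $ j" for i j
    using ab(3) a1b1 by (simp add: outer_def l_def)
  have "(pM v *v px v) $ 1 = l * (px v $ 1 + \<i> * px v $ 2)"
    by (simp add: matrix_vector_mult_def sum_3 M algebra_simps)
  then have "px v $ 1 + \<i> * px v $ 2 = 0" using eqs(1) l by simp
  then have x: "px v = px v $ 1 *s e_south" using isotropic_orthogonal_e_south eqs(3) by blast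
  have "(transpose (pM v) *v py v) $ 1 = l * (py v $ 1 + \<i> * py v $ 2)"
    by (simp add: matrix_vector_mult_def transpose_def sum_3 M algebra_simps)
  then have "py v $ 1 + \<i> * py v $ 2 = 0" using eqs(2) l by simp
  then have y: "py v = py v $ 1 *s e_south" using isotropic_orthogonal_e_south eqs(4) by blast
  have v_eq: "v = south_point l (px v $ 1) (py v $ 1) (pr v)"
    unfolding pt_eq_iff south_point_def using v(2)
    by (subst x, subst y) (simp add: vec_eq_iff outer_def M)
  have "l * pr v + 2 * px v $ 1 * py v $ 1 \<noteq> 0"
  proof
    assume "l * pr v + 2 * px v $ 1 * py v $ 1 = 0"
    then have "Nmat v = 0"
      by (subst v_eq) (simp add: vec_eq_iff Nmat_south_point)
    then show False using ir by (simp add: inversion_rep_def)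
  qed
  with l v_eq show thesis using that by blast
qed

lemma similarity_south_normal_form:
  assumes br: "boundary_rep v" and sr: "similarity_rep v" and lr: "lr_south_sim v"
  obtains m n r where "m \<noteq> 0" "n \<noteq> 0" "v = south_point 0 m n r"
proof -
  have v: "v \<in> X_cone" "ph v = 0" using br unfolding boundary_rep_def by auto
  note eqs = boundary_X_cone_equations[OF v]
  have x: "px v $ 1 \<noteq> 0" "px v = px v $ 1 *s e_south"
    using isotropic_S_south_imp_e_south_multiple eqs(3) lr unfolding lr_south_sim_def by blast+
  have y: "py v $ 1 \<noteq> 0" "py v = py v $ 1 *s e_south"
    using isotropic_S_south_imp_e_south_multiple eqs(4) lr unfolding lr_south_sim_def by blast+
  have "v = south_point 0 (px v $ 1) (py v $ 1) (pr v)"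
    unfolding pt_eq_iff south_point_def using v(2) sr
    by (subst x(2), subst y(2)) (simp add: vec_eq_iff outer_def similarity_rep_def)
  with x(1) y(1) show thesis using that by blast
qed

text \<open>The half-turn about the horizontal axis at angle \<open>arctan t\<close>, rationally parametrised.\<close>

definition flip_matrix :: "'a::field \<Rightarrow> 'a^3^3" where
  "flip_matrix t = vector [vector [(1 - t^2) / (1 + t^2), 2 * t / (1 + t^2), 0],
                           vector [2 * t / (1 + t^2), - ((1 - t^2) / (1 + t^2)), 0],
                           vector [0, 0, -1]]"

definition complex_isometry_point :: "complex^3^3 \<Rightarrow> complex^3 \<Rightarrow> pt" where
  "complex_isometry_point M y = (1, M, - (transpose M *v y), y, cinner y y)"

definition flip_domain :: "complex set" where "flip_domain = {t. 1 + t^2 \<noteq> 0}"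

lemma flip_matrix_entries_sq:
  "1 + t^2 \<noteq> 0 \<Longrightarrow>
     (1 - t^2) * (1 - t^2) / ((1 + t^2) * (1 + t^2)) + 4 * (t * t) / ((1 + t^2) * (1 + t^2)) = (1::'a::field)"
proof -
  assume n: "1 + t^2 \<noteq> 0"
  have "(1 - t^2) * (1 - t^2) + 4 * (t * t) = (1 + t^2) * (1 + t^2)"
    by (simp add: power2_eq_square algebra_simps)
  then show ?thesis using n by (simp add: add_divide_distrib[symmetric])
qed

lemma one_plus_real_sq_nonzero: "1 + (t::real)^2 \<noteq> 0"
  by (smt (verit) zero_le_power2)

lemma orthogonal_matrix_flip_matrix: "orthogonal_matrix (flip_matrix (t::real))"
  unfolding orthogonal_matrix
  by (simp add: vec_eq_iff matrix_matrix_mult_def transpose_def mat_def sum_3 forall_3 flip_matrix_def)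
     (use flip_matrix_entries_sq[OF one_plus_real_sq_nonzero] in \<open>simp add: add.commute\<close>)

lemma det_flip_matrix: "det (flip_matrix (t::real)) = 1"
  unfolding det_3
  by (simp add: flip_matrix_def)
     (use flip_matrix_entries_sq[OF one_plus_real_sq_nonzero] in \<open>simp add: power2_eq_square\<close>)

lemma flip_matrix_of_real: "flip_matrix (complex_of_real t) = cmat (flip_matrix t)"
  by (simp add: vec_eq_iff forall_3 flip_matrix_def cmat_def)

lemma complex_isometry_point_of_real: "complex_isometry_point (cmat M) (cvec y) = isometry_point M y"
  by (simp add: complex_isometry_point_def isometry_point_def vec_eq_iff cmat_def cvec_def
      matrix_vector_mult_def transpose_def cinner_def inner_vec_def)

lemma flip_domain_eq: "flip_domain = - {\<i>, - \<i>}"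
proof -
  have "1 + t^2 = (t - \<i>) * (t + \<i>)" for t :: complex
    by (simp add: power2_eq_square algebra_simps)
  then have "1 + t^2 = 0 \<longleftrightarrow> t = \<i> \<or> t = - \<i>" for t :: complex
    by (simp add: eq_neg_iff_add_eq_0)
  then show ?thesis unfolding flip_domain_def by auto
qed

lemma open_flip_domain: "open flip_domain"
  unfolding flip_domain_eq by (intro open_Compl finite_imp_closed) auto

lemma connected_flip_domain: "connected flip_domain"
  unfolding flip_domain_eq
  by (intro path_connected_imp_connected path_connected_complement_countable) auto

lemma of_real_in_flip_domain: "complex_of_real x \<in> flip_domain"
proof -
  have "complex_of_real (1 + x^2) \<noteq> 0"
    using one_plus_real_sq_nonzero by (metis of_real_eq_0_iff)
  then show ?thesis unfolding flip_domain_def by simp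
qed

lemma flip_matrix_holomorphic: "\<forall>i j. (\<lambda>t. flip_matrix t $ i $ j) holomorphic_on flip_domain"
  unfolding forall_3 flip_matrix_def
  by (simp; intro conjI holomorphic_intros; simp add: flip_domain_def)

lemma complex_isometry_point_holomorphic:
  assumes "\<forall>i j. (\<lambda>z. M z $ i $ j) holomorphic_on D" "\<forall>i. (\<lambda>z. y z $ i) holomorphic_on D"
  shows "pt_holomorphic_on (\<lambda>z. complex_isometry_point (M z) (y z)) D"
  using assms unfolding pt_holomorphic_on_def complex_isometry_point_def
  by (simp add: matrix_vector_mult_def transpose_def cinner_def) (intro allI conjI holomorphic_intros; simp)

lemma vector3_holomorphic:
  "a holomorphic_on D \<Longrightarrow> b holomorphic_on D \<Longrightarrow> c holomorphic_on D \<Longrightarrow>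
     \<forall>i. (\<lambda>z. (vector [a z, b z, c z] :: complex^3) $ i) holomorphic_on D"
  unfolding forall_3 by simp

lemma vector3_eta: "(y::'a::zero^3) = vector [y $ 1, y $ 2, y $ 3]"
  by (simp add: vec_eq_iff forall_3)

lemma cvec_vector3: "cvec (vector [a, b, c]) = vector [complex_of_real a, complex_of_real b, complex_of_real c]"
  by (simp add: vec_eq_iff forall_3 cvec_def)

text \<open>Analytic continuation from the real isometries, first in the flip parameter and then in
  one coordinate of the translation at a time.\<close>

lemma polyfun_vanishes_on_complex_flips:
  assumes f: "f \<in> polyfun" and van: "\<forall>u\<in>affine_pts. f u = 0" and t: "t \<in> flip_domain"
  shows "f (complex_isometry_point (flip_matrix t) y) = 0"
proof -
  have real: "f (complex_isometry_point (flip_matrix (complex_of_real \<tau>)) (cvec y')) = 0" for \<tau> y'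
  proof -
    have "isometry_point (flip_matrix \<tau>) y' \<in> affine_pts"
      unfolding affine_pts_def using orthogonal_matrix_flip_matrix det_flip_matrix by blast
    then show ?thesis using van by (simp add: flip_matrix_of_real complex_isometry_point_of_real)
  qed
  have A1: "f (complex_isometry_point (flip_matrix t) (cvec y')) = 0" if "t \<in> flip_domain" for t y'
    by (rule holomorphic_zero_on_reals_imp_zero[of "\<lambda>t. f (complex_isometry_point (flip_matrix t) (cvec y'))"])
       (use that real open_flip_domain connected_flip_domain of_real_in_flip_domain
         in \<open>auto intro!: polyfun_holomorphic_on[OF f] complex_isometry_point_holomorphic
                       flip_matrix_holomorphic\<close>)
  have A2: "f (complex_isometry_point (flip_matrix t) (vector [z1, complex_of_real a2, complex_of_real a3])) = 0"
    for z1 a2 a3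
    by (rule holomorphic_zero_on_reals_imp_zero[of
          "\<lambda>z. f (complex_isometry_point (flip_matrix t) (vector [z, complex_of_real a2, complex_of_real a3]))" UNIV])
       (use t A1[of t "vector [_, a2, a3]"] in
         \<open>auto simp: cvec_vector3 intro!: polyfun_holomorphic_on[OF f]
                 complex_isometry_point_holomorphic[OF _ vector3_holomorphic] holomorphic_intros\<close>)
  have A3: "f (complex_isometry_point (flip_matrix t) (vector [z1, z2, complex_of_real a3])) = 0" for z1 z2 a3
    by (rule holomorphic_zero_on_reals_imp_zero[of
          "\<lambda>z. f (complex_isometry_point (flip_matrix t) (vector [z1, z, complex_of_real a3]))" UNIV])
       (use A2 in \<open>auto intro!: polyfun_holomorphic_on[OF f]
                 complex_isometry_point_holomorphic[OF _ vector3_holomorphic] holomorphic_intros\<close>)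
  have A4: "f (complex_isometry_point (flip_matrix t) (vector [z1, z2, z3])) = 0" for z1 z2 z3
    by (rule holomorphic_zero_on_reals_imp_zero[of
          "\<lambda>z. f (complex_isometry_point (flip_matrix t) (vector [z1, z2, z]))" UNIV])
       (use A3 in \<open>auto intro!: polyfun_holomorphic_on[OF f]
                 complex_isometry_point_holomorphic[OF _ vector3_holomorphic] holomorphic_intros\<close>)
  show ?thesis using A4 vector3_eta[of y] by metis
qed

section \<open>South points lie in \<open>X\<close>\<close>

text \<open>At \<open>t = i(1 - z\<^sup>2)\<close> one has \<open>1 + t\<^sup>2 = z\<^sup>2(2 - z\<^sup>2)\<close>, so the flips degenerate as \<open>z \<rightarrow> 0\<close>.
  Rescaled by this factor and with a suitable translation they form the curve below, which is
  holomorphic near \<open>0\<close> and passes through a south point at \<open>z = 0\<close>.\<close>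

definition flip_degeneration :: "complex \<Rightarrow> complex \<Rightarrow> complex \<Rightarrow> complex \<Rightarrow> pt" where
  "flip_degeneration \<mu> \<nu> \<kappa> z = (z^2 * (2 - z^2),
     vector [vector [2 - 2 * z^2 + z^2 * z^2, 2 * \<i> * (1 - z^2), 0],
             vector [2 * \<i> * (1 - z^2), - (2 - 2 * z^2 + z^2 * z^2), 0],
             vector [0, 0, - (z^2 * (2 - z^2))]],
     vector [- 2 * \<nu> * z^2 / (2 - z^2) + 2 * \<mu>, \<i> * (2 * \<nu> * z^2 / (2 - z^2) + 2 * \<mu>), z * \<kappa>],
     vector [2 * \<nu> - 2 * \<mu> * z^2 / (2 - z^2), \<i> * (2 * \<nu> + 2 * \<mu> * z^2 / (2 - z^2)), z * \<kappa>],
     - 16 * \<nu> * \<mu> / (2 - z^2)^2 + \<kappa>^2 / (2 - z^2))"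

lemma two_minus_sq_nonzero_in_unit_ball: "z \<in> ball (0::complex) 1 \<Longrightarrow> 2 - z^2 \<noteq> 0"
proof
  assume "z \<in> ball 0 1" "2 - z^2 = 0"
  then have "(norm z)^2 < 1" "norm (z^2) = 2" by (auto simp: abs_square_less_1)
  then show False by (simp add: norm_power)
qed

lemma flip_degeneration_holomorphic: "pt_holomorphic_on (flip_degeneration \<mu> \<nu> \<kappa>) (ball 0 1)"
  unfolding pt_holomorphic_on_def flip_degeneration_def forall_3
  by simp (intro conjI holomorphic_intros; use two_minus_sq_nonzero_in_unit_ball in simp)

lemma i_mult_squares:
  "(\<i> * a)^2 = - (a^2)" "2 * (\<i> * a) * (\<i> * b) = - (2 * a * b)" "\<i> * a * (\<i> * b) = - (a * b)"
  by (simp_all add: power_mult_distrib algebra_simps)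

lemma flip_degeneration_field_identities:
  fixes w \<mu> \<nu> \<kappa> :: complex
  assumes "w \<noteq> 0" "2 - w \<noteq> 0"
  shows "2 * \<mu> - 2 * \<nu> * w / (2 - w) =
           - (w * (2 - w) * ((1 - (\<i> * (1 - w))^2) * (2 * \<nu> - 2 * \<mu> * w / (2 - w)) / (w * (2 - w) * (w * (2 - w)))
             + 2 * (\<i> * (1 - w)) * (\<i> * (2 * \<nu> + 2 * \<mu> * w / (2 - w))) / (w * (2 - w) * (w * (2 - w)))))"
      (is ?x1)
    and "\<i> * (2 * \<nu> * w / (2 - w) + 2 * \<mu>) =
           - (w * (2 - w) * (2 * (\<i> * (1 - w)) * (2 * \<nu> - 2 * \<mu> * w / (2 - w)) / (w * (2 - w) * (w * (2 - w)))
             - (1 - (\<i> * (1 - w))^2) * (\<i> * (2 * \<nu> + 2 * \<mu> * w / (2 - w))) / (w * (2 - w) * (w * (2 - w)))))"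
      (is ?x2)
    and "\<kappa>^2 / (2 - w) - 16 * \<nu> * \<mu> / (2 - w)^2 =
           w * (2 - w) * ((2 * \<nu> - 2 * \<mu> * w / (2 - w)) * (2 * \<nu> - 2 * \<mu> * w / (2 - w)) / (w * (2 - w) * (w * (2 - w)))
             + \<i> * (2 * \<nu> + 2 * \<mu> * w / (2 - w)) * (\<i> * (2 * \<nu> + 2 * \<mu> * w / (2 - w))) / (w * (2 - w) * (w * (2 - w)))
             + w * (\<kappa> * \<kappa>) / (w * (2 - w) * (w * (2 - w))))"
      (is ?r)
proof -
  define q where "q = 2 - w"
  have q: "q \<noteq> 0" "w = 2 - q" using assms q_def by auto
  show ?x1 ?x2 ?r
    unfolding i_mult_squares q_def[symmetric] using q(1) assms(1)
    by (simp_all add: field_simps) (simp_all add: q(2) power2_eq_square algebra_simps)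
qed

lemma flip_degeneration_eq_scaled_flip:
  assumes z: "z \<noteq> 0" "2 - z^2 \<noteq> 0"
  shows "flip_degeneration \<mu> \<nu> \<kappa> z =
           pscale (z^2 * (2 - z^2)) (complex_isometry_point (flip_matrix (\<i> * (1 - z^2)))
             ((1 / (z^2 * (2 - z^2))) *s py (flip_degeneration \<mu> \<nu> \<kappa> z)))"
    (is "?\<Phi> = ?R")
proof -
  have z2: "z^2 \<noteq> 0" using z by simp
  have one_plus_t_sq: "1 + (\<i> * (1 - z^2))^2 = z^2 * (2 - z^2)"
    by (simp add: power2_eq_square algebra_simps)
  have one_minus_sq: "1 - (1 - z^2)^2 = z^2 * (2 - z^2)"
    by (simp add: power2_eq_square algebra_simps)
  have sq: "z * \<kappa> * (z * \<kappa>) = z^2 * (\<kappa> * \<kappa>)"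
    by (simp add: power2_eq_square algebra_simps)
  have "ph ?\<Phi> = ph ?R"
    by (simp add: flip_degeneration_def complex_isometry_point_def)
  moreover have "pM ?\<Phi> = pM ?R"
    using z z2
    by (simp add: flip_degeneration_def complex_isometry_point_def pscale_def flip_matrix_def vec_eq_iff
        forall_3 one_plus_t_sq i_mult_squares one_minus_sq)
       (simp add: power2_eq_square algebra_simps power4_eq_xxxx)
  moreover have "px ?\<Phi> = px ?R"
    using z z2 flip_degeneration_field_identities(1,2)[OF z2 z(2), where \<mu> = \<mu> and \<nu> = \<nu>]
    by (simp add: flip_degeneration_def complex_isometry_point_def pscale_def flip_matrix_def vec_eq_iff
        forall_3 one_plus_t_sq matrix_vector_mult_def transpose_def sum_3 cinner_def)
  moreover have "py ?\<Phi> = py ?R"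
    using z z2 by (simp add: complex_isometry_point_def vec_eq_iff)
  moreover have "pr ?\<Phi> = pr ?R"
    using flip_degeneration_field_identities(3)[OF z2 z(2), where \<mu> = \<mu> and \<nu> = \<nu> and \<kappa> = \<kappa>]
    by (simp add: flip_degeneration_def complex_isometry_point_def pscale_def cinner_def sum_3 sq)
  ultimately show ?thesis by (simp add: pt_eq_iff)
qed

lemma islimpt_Diff_self: "x islimpt A \<Longrightarrow> x islimpt (A - {x})"
  unfolding islimpt_def by blast

lemma polyfun_vanishes_at_flip_degeneration_origin:
  assumes f: "f \<in> polyfun" and h: "homog d f" and van: "\<forall>u\<in>affine_pts. f u = 0"
  shows "f (flip_degeneration \<mu> \<nu> \<kappa> 0) = 0"
proof (rule analytic_continuation[of "\<lambda>z. f (flip_degeneration \<mu> \<nu> \<kappa> z)" "ball 0 1" "ball 0 1 - {0}" 0])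
  show "(\<lambda>z. f (flip_degeneration \<mu> \<nu> \<kappa> z)) holomorphic_on ball 0 1"
    by (rule polyfun_holomorphic_on[OF f flip_degeneration_holomorphic])
  show "(0::complex) islimpt ball 0 1 - {0}"
    by (rule islimpt_Diff_self, rule iffD2[OF islimpt_ball]) simp
  fix z :: complex
  assume "z \<in> ball 0 1 - {0}"
  then have z: "z \<noteq> 0" "2 - z^2 \<noteq> 0" using two_minus_sq_nonzero_in_unit_ball by auto
  have "1 + (\<i> * (1 - z^2))^2 = z^2 * (2 - z^2)" by (simp add: power2_eq_square algebra_simps)
  then have "\<i> * (1 - z^2) \<in> flip_domain" using z by (simp add: flip_domain_def)
  then show "f (flip_degeneration \<mu> \<nu> \<kappa> z) = 0"
    by (subst flip_degeneration_eq_scaled_flip[OF z])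
       (simp add: homog_pscale[OF h] polyfun_vanishes_on_complex_flips[OF f van])
qed auto

lemma polyfun_vanishes_on_south_point:
  assumes f: "f \<in> polyfun" and h: "homog d f" and van: "\<forall>u\<in>affine_pts. f u = 0"
  shows "f (south_point l m n r) = 0"
proof -
  have l2: "f (south_point 2 m n r) = 0" for m n r
  proof -
    define \<kappa> where "\<kappa> = csqrt (2 * r + 2 * m * n)"
    have "south_point 2 m n r = flip_degeneration (m / 2) (n / 2) \<kappa> 0"
      unfolding south_point_def flip_degeneration_def pt_eq_iff
      by (simp add: vec_eq_iff forall_3 outer_def e_south_def \<kappa>_def field_simps)
    then show ?thesis using polyfun_vanishes_at_flip_degeneration_origin[OF f h van] by simp
  qed
  have l_nonzero: "f (south_point l m n r) = 0" if "l \<noteq> 0" for l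
  proof -
    have "south_point l m n r = pscale (l / 2) (south_point 2 (2 * m / l) (2 * n / l) (2 * r / l))"
      using that by (simp add: south_point_pscale)
    then show ?thesis by (simp add: homog_pscale[OF h] l2)
  qed
  have "f (south_point 0 m n r) = 0"
  proof (rule analytic_continuation[of "\<lambda>l. f (south_point l m n r)" UNIV "UNIV - {0}" 0])
    show "(\<lambda>l. f (south_point l m n r)) holomorphic_on UNIV"
      by (rule polyfun_holomorphic_on[OF f])
         (simp add: pt_holomorphic_on_def south_point_def outer_def holomorphic_intros)
    show "(0::complex) islimpt UNIV - {0}" by (rule islimpt_Diff_self) simp
  qed (use l_nonzero in auto)
  with l_nonzero show ?thesis by (cases "l = 0") auto
qed

lemma south_point_in_X_cone:
  "south_point l m n r \<noteq> (0, 0, 0, 0, 0) \<Longrightarrow> south_point l m n r \<in> X_cone"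
  unfolding X_cone_def using polyfun_vanishes_on_south_point by blast

lemma south_point_boundary_rep:
  assumes "south_point l m n r \<noteq> (0, 0, 0, 0, 0)"
  shows "boundary_rep (south_point l m n r)"
  using south_point_in_X_cone[OF assms] by (simp add: boundary_rep_def south_point_def)

lemma south_point_inversion:
  assumes l: "l \<noteq> 0" and d: "l * r + 2 * m * n \<noteq> 0"
  shows "boundary_rep (south_point l m n r) \<and> inversion_rep (south_point l m n r) \<and>
         lr_south_inv (south_point l m n r)"
proof -
  have "pM (south_point l m n r) $ 1 $ 1 = l" by (simp add: south_point_def outer_def)
  then have M: "pM (south_point l m n r) \<noteq> 0" using l by auto
  then have "boundary_rep (south_point l m n r)" by (intro south_point_boundary_rep) auto
  moreover have "Nmat (south_point l m n r) \<noteq> 0"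
    using Nmat_south_point[of l m n r 1 1] d by auto
  then have "inversion_rep (south_point l m n r)" using M by (simp add: inversion_rep_def)
  moreover have "lr_south_inv (south_point l m n r)"
    unfolding lr_south_inv_def
    by (rule exI[of _ "l *s e_south"], rule exI[of _ e_south])
       (use l S_scaled_e_south[of l] S_scaled_e_south[of 1] isotropic_scaled_e_south[of l]
          isotropic_scaled_e_south[of 1] in \<open>auto simp: south_point_def vec_eq_iff\<close>)
  ultimately show ?thesis by blast
qed

lemma south_point_similarity:
  assumes "m \<noteq> 0" "n \<noteq> 0"
  shows "boundary_rep (south_point 0 m n r) \<and> similarity_rep (south_point 0 m n r) \<and>
         lr_south_sim (south_point 0 m n r)"
proof -
  have xy: "px (south_point 0 m n r) \<noteq> 0" "py (south_point 0 m n r) \<noteq> 0"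
    using assms by (auto simp: south_point_def vec_eq_iff)
  then have "boundary_rep (south_point 0 m n r)" by (intro south_point_boundary_rep) auto
  moreover have "similarity_rep (south_point 0 m n r)"
    using xy by (simp add: similarity_rep_def south_point_def vec_eq_iff outer_def)
  moreover have "lr_south_sim (south_point 0 m n r)"
    using assms by (simp add: lr_south_sim_def south_point_def S_scaled_e_south)
  ultimately show ?thesis by blast
qed

definition psc_value :: "pt \<Rightarrow> real^3 \<Rightarrow> real^3 \<Rightarrow> complex" where
  "psc_value v p P = pr v - 2 * cinner (cvec p) (px v) - 2 * cinner (py v) (cvec P)
     - 2 * cinner (pM v *v cvec p) (cvec P)"

lemma psc_value_pscale: "psc_value (pscale c v) p P = c * psc_value v p P"
  by (simp add: psc_value_def cinner_def matrix_vector_mult_def sum_3 algebra_simps)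

lemma pseudo_spherical_proj_class_iff: "pseudo_spherical (proj_class v) p P \<longleftrightarrow> psc_value v p P = 0"
proof -
  have psc: "psc_rep w p P \<longleftrightarrow> psc_value w p P = 0" for w by (simp add: psc_rep_def psc_value_def)
  show ?thesis
  proof
    assume "pseudo_spherical (proj_class v) p P"
    then show "psc_value v p P = 0"
      using mem_proj_class_self psc unfolding pseudo_spherical_def by blast
  next
    assume "psc_value v p P = 0"
    then show "pseudo_spherical (proj_class v) p P"
      unfolding pseudo_spherical_def proj_class_def by (auto simp: psc psc_value_pscale)
  qed
qed

lemma proj_xy_eq: "proj_xy p = complex_of_real (p $ 1) + \<i> * complex_of_real (p $ 2)"
  by (simp add: proj_xy_def Complex_eq)

lemma psc_value_south_point:
  "psc_value (south_point l m n r) p P =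
     r - 2 * m * proj_xy p - 2 * n * proj_xy P - 2 * l * proj_xy p * proj_xy P"
proof -
  have "cinner (cvec p) (m *s e_south) = m * proj_xy p"
    and "cinner (n *s e_south) (cvec P) = n * proj_xy P"
    and "outer (l *s e_south) e_south *v cvec p = (l * proj_xy p) *s e_south"
    and "cinner ((l * proj_xy p) *s e_south) (cvec P) = l * proj_xy p * proj_xy P"
    by (simp_all add: vec_eq_iff cinner_def outer_def matrix_vector_mult_def cvec_def sum_3 proj_xy_eq
        algebra_simps)
  then show ?thesis by (simp add: psc_value_def south_point_def)
qed

lemma proj_xy_surj: "\<exists>p. proj_xy p = z"
  by (intro exI[of _ "vector [Re z, Im z, 0]"]) (simp add: proj_xy_def)

section \<open>Parametrising the south points by inversions and similarities\<close>

definition inversion_map :: "complex \<Rightarrow> complex \<Rightarrow> complex \<Rightarrow> complex \<Rightarrow> complex option" where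
  "inversion_map \<alpha> z\<^sub>0 w\<^sub>0 = (\<lambda>z. if z = z\<^sub>0 then None else Some (\<alpha> / (z - z\<^sub>0) + w\<^sub>0))"

text \<open>Normalised so that the pseudo spherical condition becomes \<open>(q - z\<^sub>0)(Q - w\<^sub>0) = \<alpha>\<close>.\<close>

definition inversion_point :: "complex \<Rightarrow> complex \<Rightarrow> complex \<Rightarrow> pt set" where
  "inversion_point \<alpha> z\<^sub>0 w\<^sub>0 = proj_class (south_point 1 (- w\<^sub>0) (- z\<^sub>0) (2 * \<alpha> - 2 * z\<^sub>0 * w\<^sub>0))"

definition similarity_point :: "complex \<Rightarrow> complex \<Rightarrow> pt set" where
  "similarity_point \<alpha> \<gamma> = proj_class (south_point 0 (- \<alpha>) 1 (2 * \<gamma>))"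

lemma inv_south_pts_eq: "inv_south_pts = {inversion_point \<alpha> z\<^sub>0 w\<^sub>0 | \<alpha> z\<^sub>0 w\<^sub>0. \<alpha> \<noteq> 0}"
proof (intro set_eqI iffI)
  fix \<beta>
  assume "\<beta> \<in> inv_south_pts"
  then obtain v where v: "\<beta> = proj_class v" "boundary_rep v" "inversion_rep v" "lr_south_inv v"
    unfolding inv_south_pts_def by blast
  obtain l m n r where l: "l \<noteq> 0" and d: "l * r + 2 * m * n \<noteq> 0" and "v = south_point l m n r"
    by (rule inversion_south_normal_form[OF v(2-4)])
  moreover have "south_point l m n r = pscale l (south_point 1 (- (- m / l)) (- (- n / l))
                   (2 * ((l * r + 2 * m * n) / (2 * l^2)) - 2 * (- n / l) * (- m / l)))"
    using l by (simp add: south_point_pscale field_simps power2_eq_square)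
  ultimately have "\<beta> = inversion_point ((l * r + 2 * m * n) / (2 * l^2)) (- n / l) (- m / l)"
    using v(1) by (simp add: inversion_point_def proj_class_pscale)
  moreover have "(l * r + 2 * m * n) / (2 * l^2) \<noteq> 0" using l d by simp
  ultimately show "\<beta> \<in> {inversion_point \<alpha> z\<^sub>0 w\<^sub>0 | \<alpha> z\<^sub>0 w\<^sub>0. \<alpha> \<noteq> 0}" by blast
next
  fix \<beta>
  assume "\<beta> \<in> {inversion_point \<alpha> z\<^sub>0 w\<^sub>0 | \<alpha> z\<^sub>0 w\<^sub>0. \<alpha> \<noteq> 0}"
  then obtain \<alpha> z\<^sub>0 w\<^sub>0 where "\<alpha> \<noteq> 0" "\<beta> = inversion_point \<alpha> z\<^sub>0 w\<^sub>0" by blast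
  moreover have "1 * (2 * \<alpha> - 2 * z\<^sub>0 * w\<^sub>0) + 2 * (- w\<^sub>0) * (- z\<^sub>0) = 2 * \<alpha>" by simp
  ultimately show "\<beta> \<in> inv_south_pts"
    using south_point_inversion[of 1 "2 * \<alpha> - 2 * z\<^sub>0 * w\<^sub>0" "- w\<^sub>0" "- z\<^sub>0"]
    unfolding inv_south_pts_def inversion_point_def by auto
qed

lemma sim_south_pts_eq: "sim_south_pts = {similarity_point \<alpha> \<gamma> | \<alpha> \<gamma>. \<alpha> \<noteq> 0}"
proof (intro set_eqI iffI)
  fix \<beta>
  assume "\<beta> \<in> sim_south_pts"
  then obtain v where v: "\<beta> = proj_class v" "boundary_rep v" "similarity_rep v" "lr_south_sim v"
    unfolding sim_south_pts_def by blast
  obtain m n r where m: "m \<noteq> 0" and n: "n \<noteq> 0" and "v = south_point 0 m n r"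
    by (rule similarity_south_normal_form[OF v(2-4)])
  moreover have "south_point 0 m n r = pscale n (south_point 0 (- (- m / n)) 1 (2 * (r / (2 * n))))"
    using n by (simp add: south_point_pscale)
  ultimately have "\<beta> = similarity_point (- m / n) (r / (2 * n))"
    using v(1) by (simp add: similarity_point_def proj_class_pscale)
  then show "\<beta> \<in> {similarity_point \<alpha> \<gamma> | \<alpha> \<gamma>. \<alpha> \<noteq> 0}" using m n by auto
next
  fix \<beta>
  assume "\<beta> \<in> {similarity_point \<alpha> \<gamma> | \<alpha> \<gamma>. \<alpha> \<noteq> 0}"
  then show "\<beta> \<in> sim_south_pts"
    using south_point_similarity[of "- _" 1] unfolding sim_south_pts_def similarity_point_def by fastforce
qed

lemma pseudo_spherical_inversion_point:
  assumes "\<alpha> \<noteq> 0"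
  shows "pseudo_spherical (inversion_point \<alpha> z\<^sub>0 w\<^sub>0) p P \<longleftrightarrow>
           inversion_map \<alpha> z\<^sub>0 w\<^sub>0 (proj_xy p) = Some (proj_xy P)"
proof -
  have "psc_value (south_point 1 (- w\<^sub>0) (- z\<^sub>0) (2 * \<alpha> - 2 * z\<^sub>0 * w\<^sub>0)) p P
          = - 2 * ((proj_xy p - z\<^sub>0) * (proj_xy P - w\<^sub>0) - \<alpha>)"
    by (simp add: psc_value_south_point algebra_simps)
  then have "psc_value (south_point 1 (- w\<^sub>0) (- z\<^sub>0) (2 * \<alpha> - 2 * z\<^sub>0 * w\<^sub>0)) p P = 0
               \<longleftrightarrow> (proj_xy p - z\<^sub>0) * (proj_xy P - w\<^sub>0) = \<alpha>"
    by (simp only: mult_eq_0_iff right_minus_eq) simp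
  moreover have "(q - z\<^sub>0) * (Q - w\<^sub>0) = \<alpha> \<longleftrightarrow> q \<noteq> z\<^sub>0 \<and> Q = \<alpha> / (q - z\<^sub>0) + w\<^sub>0" for q Q
  proof (cases "q = z\<^sub>0")
    case False
    then have "q - z\<^sub>0 \<noteq> 0" by simp
    then show ?thesis by (auto simp: field_simps)
  qed (use assms in simp)
  ultimately show ?thesis
    unfolding inversion_point_def pseudo_spherical_proj_class_iff inversion_map_def by auto
qed

lemma pseudo_spherical_similarity_point:
  "pseudo_spherical (similarity_point \<alpha> \<gamma>) p P \<longleftrightarrow> \<alpha> * proj_xy p + \<gamma> = proj_xy P"
proof -
  have "psc_value (south_point 0 (- \<alpha>) 1 (2 * \<gamma>)) p P = 2 * (\<alpha> * proj_xy p + \<gamma> - proj_xy P)"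
    by (simp add: psc_value_south_point algebra_simps)
  then show ?thesis
    unfolding similarity_point_def pseudo_spherical_proj_class_iff by (simp only: mult_eq_0_iff right_minus_eq) simp
qed

lemma inversion_map_inject:
  assumes "inversion_map \<alpha> z\<^sub>0 w\<^sub>0 = inversion_map \<alpha>' z\<^sub>0' w\<^sub>0'"
  shows "\<alpha> = \<alpha>' \<and> z\<^sub>0 = z\<^sub>0' \<and> w\<^sub>0 = w\<^sub>0'"
proof -
  have e: "inversion_map \<alpha> z\<^sub>0 w\<^sub>0 z = inversion_map \<alpha>' z\<^sub>0' w\<^sub>0' z" for z using assms by simp
  have z: "z\<^sub>0 = z\<^sub>0'" using e[of z\<^sub>0] by (simp add: inversion_map_def split: if_splits)
  have plus: "\<alpha> + w\<^sub>0 = \<alpha>' + w\<^sub>0'" using e[of "z\<^sub>0 + 1"] z by (simp add: inversion_map_def)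
  have minus: "w\<^sub>0 - \<alpha> = w\<^sub>0' - \<alpha>'" using e[of "z\<^sub>0 - 1"] z by (simp add: inversion_map_def)
  have "2 * w\<^sub>0 = (\<alpha> + w\<^sub>0) + (w\<^sub>0 - \<alpha>)" by simp
  also have "\<dots> = 2 * w\<^sub>0'" unfolding plus minus by simp
  finally have "w\<^sub>0 = w\<^sub>0'" by simp
  with plus z show ?thesis by simp
qed

lemma similarity_map_inject:
  fixes \<alpha> \<gamma> \<alpha>' \<gamma>' :: complex
  assumes "(\<lambda>z. \<alpha> * z + \<gamma>) = (\<lambda>z. \<alpha>' * z + \<gamma>')"
  shows "\<alpha> = \<alpha>' \<and> \<gamma> = \<gamma>'"
  using fun_cong[OF assms, of 0] fun_cong[OF assms, of 1] by simp

lemma option_eq_if_same_Some: "(\<And>y. a = Some y \<longleftrightarrow> b = Some y) \<Longrightarrow> a = b"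
  by (cases a; cases b) auto

lemma bij_betw_from_parametrisation:
  assumes A: "A = P ` K" and B: "B = F ` K" and inj: "inj_on F K"
    and rel: "\<And>k. k \<in> K \<Longrightarrow> R (P k) (F k)"
    and functional: "\<And>\<beta> f g. R \<beta> f \<Longrightarrow> R \<beta> g \<Longrightarrow> f = g"
  shows "\<exists>\<kappa>. bij_betw \<kappa> A B \<and> (\<forall>\<beta>\<in>A. R \<beta> (\<kappa> \<beta>))"
proof -
  define \<kappa> where "\<kappa> \<beta> = (THE f. R \<beta> f)" for \<beta>
  have \<kappa>P: "\<kappa> (P k) = F k" if "k \<in> K" for k
    unfolding \<kappa>_def using rel[OF that] functional by blast
  have "inj_on \<kappa> A"
  proof (rule inj_onI)
    fix x y
    assume "x \<in> A" "y \<in> A" "\<kappa> x = \<kappa> y"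
    then obtain k k' where "k \<in> K" "k' \<in> K" "x = P k" "y = P k'" "F k = F k'"
      unfolding A using \<kappa>P by force
    then show "x = y" using inj_onD[OF inj] by metis
  qed
  moreover have "\<kappa> ` A = B" unfolding A B image_image using \<kappa>P by (intro image_cong) auto
  moreover have "\<forall>\<beta>\<in>A. R \<beta> (\<kappa> \<beta>)" unfolding A using rel \<kappa>P by auto
  ultimately show ?thesis unfolding bij_betw_def by blast
qed

lemma pseudo_spherical_determines_partial_map:
  assumes "\<forall>p P. pseudo_spherical \<beta> p P \<longleftrightarrow> f (proj_xy p) = Some (proj_xy P)"
    and "\<forall>p P. pseudo_spherical \<beta> p P \<longleftrightarrow> g (proj_xy p) = Some (proj_xy P)"
  shows "f = g"
proof
  fix z
  obtain p where "proj_xy p = z" using proj_xy_surj by blast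
  moreover have "\<exists>P. proj_xy P = Q" for Q by (rule proj_xy_surj)
  ultimately show "f z = g z"
    using assms by (intro option_eq_if_same_Some) metis
qed

lemma pseudo_spherical_determines_map:
  assumes "\<forall>p P. pseudo_spherical \<beta> p P \<longleftrightarrow> f (proj_xy p) = proj_xy P"
    and "\<forall>p P. pseudo_spherical \<beta> p P \<longleftrightarrow> g (proj_xy p) = proj_xy P"
  shows "f = g"
proof
  fix z
  obtain p where p: "proj_xy p = z" using proj_xy_surj by blast
  obtain P where "proj_xy P = f z" using proj_xy_surj by blast
  then show "f z = g z" using assms p by metis
qed

lemma inv_south_pts_correspondence:
  "\<exists>\<kappa>. bij_betw \<kappa> inv_south_pts inversions_C \<and>
     (\<forall>\<beta>\<in>inv_south_pts. \<forall>p P. pseudo_spherical \<beta> p P \<longleftrightarrow> \<kappa> \<beta> (proj_xy p) = Some (proj_xy P))"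
proof (rule bij_betw_from_parametrisation[where K = "{(\<alpha>, z\<^sub>0, w\<^sub>0). \<alpha> \<noteq> (0::complex)}"
    and P = "\<lambda>(\<alpha>, z\<^sub>0, w\<^sub>0). inversion_point \<alpha> z\<^sub>0 w\<^sub>0" and F = "\<lambda>(\<alpha>, z\<^sub>0, w\<^sub>0). inversion_map \<alpha> z\<^sub>0 w\<^sub>0"
    and R = "\<lambda>\<beta> f. \<forall>p P. pseudo_spherical \<beta> p P \<longleftrightarrow> f (proj_xy p) = Some (proj_xy P)"])
  show "inv_south_pts = (\<lambda>(\<alpha>, z\<^sub>0, w\<^sub>0). inversion_point \<alpha> z\<^sub>0 w\<^sub>0) ` {(\<alpha>, z\<^sub>0, w\<^sub>0). \<alpha> \<noteq> (0::complex)}"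
    unfolding inv_south_pts_eq by (auto simp: image_iff)
  show "inversions_C = (\<lambda>(\<alpha>, z\<^sub>0, w\<^sub>0). inversion_map \<alpha> z\<^sub>0 w\<^sub>0) ` {(\<alpha>, z\<^sub>0, w\<^sub>0). \<alpha> \<noteq> (0::complex)}"
    unfolding inversions_C_def inversion_map_def by (auto simp: image_iff) blast
  show "inj_on (\<lambda>(\<alpha>, z\<^sub>0, w\<^sub>0). inversion_map \<alpha> z\<^sub>0 w\<^sub>0) {(\<alpha>, z\<^sub>0, w\<^sub>0). \<alpha> \<noteq> (0::complex)}"
    by (rule inj_onI) (auto dest: inversion_map_inject)
qed (fastforce simp: pseudo_spherical_inversion_point, rule pseudo_spherical_determines_partial_map)

lemma sim_south_pts_correspondence:
  "\<exists>\<kappa>. bij_betw \<kappa> sim_south_pts similarities_C \<and>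
     (\<forall>\<beta>\<in>sim_south_pts. \<forall>p P. pseudo_spherical \<beta> p P \<longleftrightarrow> \<kappa> \<beta> (proj_xy p) = proj_xy P)"
proof (rule bij_betw_from_parametrisation[where K = "{(\<alpha>, \<gamma>). \<alpha> \<noteq> (0::complex)}"
    and P = "\<lambda>(\<alpha>, \<gamma>). similarity_point \<alpha> \<gamma>" and F = "\<lambda>(\<alpha>, \<gamma>) z. \<alpha> * z + \<gamma>"
    and R = "\<lambda>\<beta> f. \<forall>p P. pseudo_spherical \<beta> p P \<longleftrightarrow> f (proj_xy p) = proj_xy P"])
  show "sim_south_pts = (\<lambda>(\<alpha>, \<gamma>). similarity_point \<alpha> \<gamma>) ` {(\<alpha>, \<gamma>). \<alpha> \<noteq> (0::complex)}"
    unfolding sim_south_pts_eq by (auto simp: image_iff)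
  show "similarities_C = (\<lambda>(\<alpha>, \<gamma>) z. \<alpha> * z + \<gamma>) ` {(\<alpha>, \<gamma>). \<alpha> \<noteq> (0::complex)}"
    unfolding similarities_C_def by (auto simp: image_iff)
  show "inj_on (\<lambda>(\<alpha>, \<gamma>) z. \<alpha> * z + \<gamma>) {(\<alpha>, \<gamma>). \<alpha> \<noteq> (0::complex)}"
    by (rule inj_onI) (auto dest: similarity_map_inject)
qed (fastforce simp: pseudo_spherical_similarity_point, rule pseudo_spherical_determines_map)

theorem mainTheorem2:
  shows "(\<exists>\<kappa>. bij_betw \<kappa> inv_south_pts inversions_C \<and>
            (\<forall>\<beta>\<in>inv_south_pts. \<forall>p P.
               pseudo_spherical \<beta> p P \<longleftrightarrow> \<kappa> \<beta> (proj_xy p) = Some (proj_xy P))) \<and>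
         (\<exists>\<kappa>. bij_betw \<kappa> sim_south_pts similarities_C \<and>
            (\<forall>\<beta>\<in>sim_south_pts. \<forall>p P.
               pseudo_spherical \<beta> p P \<longleftrightarrow> \<kappa> \<beta> (proj_xy p) = proj_xy P))"
  using inv_south_pts_correspondence sim_south_pts_correspondence by (rule conjI)

end
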